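(* Let $(X,G)$ be a free exact $G$-odometer determined by a decreasing sequence $\{G_n\}_{n\ge0}$ of finite-index normal subgroups of $G$. Then: (1) for each $n$, the group $[[G]]_n$ is isomorphic to a semidirect product $G_n^{[G:G_n]}\rtimes S_{[G:G_n]}$, where $S_p$ denotes the symmetric group on $p$ letters (the normal factor $G_n^{[G:G_n]}$ corresponding to the elements of $[[G]]_n$ that leave each atom of $\mathcal P_n$ invariant, and $S_{[G:G_n]}$ to the permutation of the atoms of $\mathcal P_n$); (2) the topological full group $[[G]]$ is the increasing union (inductive limit) of these groups $[[G]]_n\cong G_n^{[G:G_n]}\rtimes S_{[G:G_n]}$.
   Context: Exact $G$-odometer: for a decreasing sequence of finite-index normal subgroups $G_n$ of $G$, the inverse limit $X=\varprojlim(G/G_n,\pi_n)$ under the natural quotient maps, with $G$ acting by left multiplication coordinatewise. $C_n$ is the set of $x=(x_k)\in X$ with $x_n=G_n$, and $\mathcal P_n=\{f\cdot C_n:f\in F_n\}$ for a set $F_n$ of representatives of $G/G_n$, a clopen partition of $X$. Topological full group $[[G]]$: all homeomorphisms $s$ of $X$ such that every $x$ has a clopen neighborhood $U$ and some $g\in G$ with $s=g$ on $U$. For $\gamma\in[[G]]$, $f(\gamma,x)\in G$ is the unique element with $f(\gamma,x)\cdot x=\gamma\cdot x$; $[[G]]_n$ is the subgroup of $\gamma\in[[G]]$ with $f(\gamma,\cdot)$ constant on each atom of $\mathcal P_n$. *)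

theory Defs
  imports "HOL-Analysis.Analysis" "HOL-Algebra.Algebra"
begin

text \<open>Throughout, G is a group (HOL-Algebra structure) and Gs :: nat => 'a set is a
  sequence of subgroups; G/G_n is represented by the set of left cosets a G_n.\<close>

definition left_cosets :: "('a, 'b) monoid_scheme \<Rightarrow> 'a set \<Rightarrow> 'a set set" where
  "left_cosets G H = (\<lambda>a. l_coset G a H) ` carrier G"

text \<open>The inverse limit X of (G/G_n, pi_n): sequences of cosets x_n in G/G_n with
  pi_n(x_(n+1)) = x_n, i.e. x_(n+1) contained in x_n.\<close>

definition odometer_space :: "('a, 'b) monoid_scheme \<Rightarrow> (nat \<Rightarrow> 'a set) \<Rightarrow> (nat \<Rightarrow> 'a set) set" where
  "odometer_space G Gs =
     {x. (\<forall>n. x n \<in> left_cosets G (Gs n)) \<and> (\<forall>n. x (Suc n) \<subseteq> x n)}"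

definition odometer_topology :: "('a, 'b) monoid_scheme \<Rightarrow> (nat \<Rightarrow> 'a set) \<Rightarrow> (nat \<Rightarrow> 'a set) topology" where
  "odometer_topology G Gs =
     subtopology (product_topology (\<lambda>n. discrete_topology (left_cosets G (Gs n))) UNIV)
                 (odometer_space G Gs)"

definition odo_act :: "('a, 'b) monoid_scheme \<Rightarrow> 'a \<Rightarrow> (nat \<Rightarrow> 'a set) \<Rightarrow> (nat \<Rightarrow> 'a set)" where
  "odo_act G g x = (\<lambda>n. l_coset G g (x n))"

definition free_odometer :: "('a, 'b) monoid_scheme \<Rightarrow> (nat \<Rightarrow> 'a set) \<Rightarrow> bool" where
  "free_odometer G Gs \<longleftrightarrow>
     (\<forall>g \<in> carrier G. \<forall>x \<in> odometer_space G Gs. odo_act G g x = x \<longrightarrow> g = \<one>\<^bsub>G\<^esub>)"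

definition clopen_in :: "'x topology \<Rightarrow> 'x set \<Rightarrow> bool" where
  "clopen_in T U \<longleftrightarrow> openin T U \<and> closedin T U"

text \<open>To get a genuine
  group of functions, elements are normalised to be the identity outside X.\<close>

definition full_group_carrier :: "('a, 'b) monoid_scheme \<Rightarrow> (nat \<Rightarrow> 'a set) \<Rightarrow> ((nat \<Rightarrow> 'a set) \<Rightarrow> (nat \<Rightarrow> 'a set)) set" where
  "full_group_carrier G Gs =
     {s. homeomorphic_map (odometer_topology G Gs) (odometer_topology G Gs) s
       \<and> (\<forall>x. x \<notin> odometer_space G Gs \<longrightarrow> s x = x)
       \<and> (\<forall>x \<in> odometer_space G Gs. \<exists>U g. clopen_in (odometer_topology G Gs) U \<and> x \<in> U
             \<and> g \<in> carrier G \<and> (\<forall>y \<in> U. s y = odo_act G g y))}"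

definition full_group :: "('a, 'b) monoid_scheme \<Rightarrow> (nat \<Rightarrow> 'a set) \<Rightarrow> ((nat \<Rightarrow> 'a set) \<Rightarrow> (nat \<Rightarrow> 'a set)) monoid" where
  "full_group G Gs = \<lparr>carrier = full_group_carrier G Gs, mult = (\<lambda>s t. s \<circ> t), one = id\<rparr>"

definition cocycle :: "('a, 'b) monoid_scheme \<Rightarrow> ((nat \<Rightarrow> 'a set) \<Rightarrow> (nat \<Rightarrow> 'a set)) \<Rightarrow> (nat \<Rightarrow> 'a set) \<Rightarrow> 'a" where
  "cocycle G \<gamma> x = (THE g. g \<in> carrier G \<and> odo_act G g x = \<gamma> x)"

text \<open>The atom of P_n determined by the coset c in G/G_n is {x in X. x_n = c}
  (this is f . C_n when c = f G_n).\<close>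

definition atom :: "('a, 'b) monoid_scheme \<Rightarrow> (nat \<Rightarrow> 'a set) \<Rightarrow> nat \<Rightarrow> 'a set \<Rightarrow> (nat \<Rightarrow> 'a set) set" where
  "atom G Gs n c = {x \<in> odometer_space G Gs. x n = c}"

definition full_group_level :: "('a, 'b) monoid_scheme \<Rightarrow> (nat \<Rightarrow> 'a set) \<Rightarrow> nat \<Rightarrow> ((nat \<Rightarrow> 'a set) \<Rightarrow> (nat \<Rightarrow> 'a set)) set" where
  "full_group_level G Gs n =
     {\<gamma> \<in> full_group_carrier G Gs.
        \<forall>c \<in> left_cosets G (Gs n). \<forall>x \<in> atom G Gs n c. \<forall>y \<in> atom G Gs n c.
           cocycle G \<gamma> x = cocycle G \<gamma> y}"

text \<open>The semidirect product N^p \<rtimes> S_p, where S_p = permutations of {0..<p} acts on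
  N^p = ({0..<p} -> N) by permuting coordinates: (sigma . b)(i) = b(sigma^-1 i).\<close>

definition perm_semidirect :: "('a, 'b) monoid_scheme \<Rightarrow> nat \<Rightarrow> ((nat \<Rightarrow> 'a) \<times> (nat \<Rightarrow> nat)) monoid" where
  "perm_semidirect N p =
     \<lparr>carrier = ({0..<p} \<rightarrow>\<^sub>E carrier N) \<times> {\<sigma>. \<sigma> permutes {0..<p}},
      mult = (\<lambda>(a, \<sigma>) (b, \<tau>).
                (\<lambda>i \<in> {0..<p}. a i \<otimes>\<^bsub>N\<^esub> b (inv_into {0..<p} \<sigma> i), \<sigma> \<circ> \<tau>)),
      one = (\<lambda>i \<in> {0..<p}. \<one>\<^bsub>N\<^esub>, id)\<rparr>"

end

(* An element of [[G]] agrees near every point with the action of a group element; the atoms of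
   the partitions P_m form a base of clopen sets, so by compactness of X finitely many atoms
   suffice and the element lies in some [[G]]_N, while [[G]]_N grows with N.
   An element of [[G]]_n is given by a permutation \<sigma> of the atoms of P_n together with, for each
   atom C_i, the group element g_i translating it onto C_(\<sigma> i); by freeness g_i is unique.
   With coset representatives r_i of G/G_n, the elements r_(\<sigma> i)^-1 g_i r_i lie in G_n, and
   recording them next to \<sigma> gives the isomorphism with G_n^p \<rtimes> S_p. *)

theory Submission
  imports Defs
begin

(* the ASCII multiset notation would make every left coset x <# H ambiguous *)
no_notation (ASCII) subset_mset (infix \<open><#\<close> 50)

lemma left_cosets_eq_lcosets: "left_cosets G H = lcosets\<^bsub>G\<^esub> H"
  unfolding left_cosets_def LCOSETS_def by blast

lemma l_coset_mono: "A \<subseteq> B \<Longrightarrow> g <#\<^bsub>G\<^esub> A \<subseteq> g <#\<^bsub>G\<^esub> B"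
  unfolding l_coset_def by blast

lemma (in group) l_coset_eq_iff_inv_mult_mem:
  assumes H: "subgroup H G" and x: "x \<in> carrier G" and y: "y \<in> carrier G"
  shows "x <# H = y <# H \<longleftrightarrow> inv y \<otimes> x \<in> H"
proof
  assume "x <# H = y <# H"
  then have "x \<in> y <# H" using lcos_self[OF x H] by simp
  then show "inv y \<otimes> x \<in> H" by (rule subgroup.lcos_module_imp[OF H is_group y])
next
  assume "inv y \<otimes> x \<in> H"
  then have "x \<in> y <# H" by (rule subgroup.lcos_module_rev[OF H is_group y x])
  then show "x <# H = y <# H" by (rule sym[OF l_repr_independence[OF _ y H]])
qed

lemma (in group) mult_inv_cancel_left: "x \<in> carrier G \<Longrightarrow> y \<in> carrier G \<Longrightarrow> x \<otimes> (inv x \<otimes> y) = y"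
  by (simp add: m_assoc[symmetric])

lemma (in group) inv_mult_cancel_left: "x \<in> carrier G \<Longrightarrow> y \<in> carrier G \<Longrightarrow> inv x \<otimes> (x \<otimes> y) = y"
  by (simp add: m_assoc[symmetric])

lemma permutes_inv_into:
  assumes "\<sigma> permutes S" "j \<in> S"
  shows "inv_into S \<sigma> j \<in> S" "\<sigma> (inv_into S \<sigma> j) = j"
  using assms permutes_imp_bij[OF assms(1)] bij_betw_inv_into_right[of \<sigma> S S j]
  by (auto intro: inv_into_into simp: bij_betw_def)

lemma full_group_inv_eq:
  assumes "t \<in> full_group_carrier G Gs" "s \<circ> t = id" "t \<circ> s = id"
  shows "inv\<^bsub>full_group G Gs\<^esub> s = t"
  unfolding m_inv_def
proof (rule the_equality)
  fix u assume "u \<in> carrier (full_group G Gs) \<and> s \<otimes>\<^bsub>full_group G Gs\<^esub> u = \<one>\<^bsub>full_group G Gs\<^esub>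
      \<and> u \<otimes>\<^bsub>full_group G Gs\<^esub> s = \<one>\<^bsub>full_group G Gs\<^esub>"
  then have "s \<circ> u = id" by (simp add: full_group_def)
  then have "(t \<circ> s) \<circ> u = t" by (simp add: comp_assoc)
  then show "u = t" using assms(3) by simp
qed (use assms in \<open>simp add: full_group_def\<close>)

locale free_odometer_action = group G for G :: "('a, 'b) monoid_scheme" (structure) +
  fixes Gs :: "nat \<Rightarrow> 'a set"
  assumes subgroup_Gs: "subgroup (Gs n) G"
    and finite_index: "finite (left_cosets G (Gs n))"
    and Gs_decreasing: "Gs (Suc n) \<subseteq> Gs n"
    and free: "free_odometer G Gs"
begin

abbreviation "XG \<equiv> odometer_space G Gs"
abbreviation "TX \<equiv> odometer_topology G Gs"
abbreviation "cosets n \<equiv> left_cosets G (Gs n)"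

lemma mem_cosets_iff: "c \<in> cosets n \<longleftrightarrow> (\<exists>a\<in>carrier G. c = a <# Gs n)"
  by (auto simp: left_cosets_def)

lemma cosets_subset_carrier: "c \<in> cosets n \<Longrightarrow> c \<subseteq> carrier G"
  using subgroup.lcosets_carrier[OF subgroup_Gs is_group] by (simp add: left_cosets_eq_lcosets)

lemma cosets_nonempty: "c \<in> cosets n \<Longrightarrow> c \<noteq> {}"
  using mem_cosets_iff lcos_self[OF _ subgroup_Gs] by blast

lemma cosets_eqI: "c \<in> cosets n \<Longrightarrow> d \<in> cosets n \<Longrightarrow> y \<in> c \<Longrightarrow> y \<in> d \<Longrightarrow> c = d"
  using lcos_disjoint[OF subgroup_Gs] by (auto simp: left_cosets_eq_lcosets)

lemma l_coset_in_cosets: "g \<in> carrier G \<Longrightarrow> c \<in> cosets n \<Longrightarrow> g <# c \<in> cosets n"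
  by (metis mem_cosets_iff lcos_m_assoc m_closed subgroup.subset[OF subgroup_Gs])

lemma odometer_space_coord: "x \<in> XG \<Longrightarrow> x k \<in> cosets k"
  by (simp add: odometer_space_def)

lemma odometer_space_antimono: "x \<in> XG \<Longrightarrow> k \<le> m \<Longrightarrow> x m \<subseteq> x k"
  using lift_Suc_antimono_le[of x k m] unfolding odometer_space_def by blast

lemma odometer_space_coord_eq:
  assumes "x \<in> XG" "y \<in> XG" "x m = y m" "k \<le> m"
  shows "x k = y k"
proof -
  obtain z where "z \<in> x m" using cosets_nonempty odometer_space_coord[OF assms(1)] by blast
  then have "z \<in> x k" "z \<in> y k" using odometer_space_antimono assms by blast+
  then show ?thesis using cosets_eqI odometer_space_coord assms(1,2) by blast
qed

lemma mem_atom_self: "x \<in> XG \<Longrightarrow> x \<in> atom G Gs m (x m)"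
  by (simp add: atom_def)

lemma atom_antimono:
  assumes "x \<in> XG" "k \<le> m"
  shows "atom G Gs m (x m) \<subseteq> atom G Gs k (x k)"
proof
  fix y assume "y \<in> atom G Gs m (x m)"
  then show "y \<in> atom G Gs k (x k)" using odometer_space_coord_eq[of y x m k] assms by (simp add: atom_def)
qed

lemma odometer_space_coord_subset: "x \<in> XG \<Longrightarrow> x k \<subseteq> carrier G"
  using cosets_subset_carrier odometer_space_coord by blast

lemma odo_act_closed: "g \<in> carrier G \<Longrightarrow> x \<in> XG \<Longrightarrow> odo_act G g x \<in> XG"
  unfolding odometer_space_def odo_act_def by (simp add: l_coset_in_cosets l_coset_mono)

lemma odo_act_one: "x \<in> XG \<Longrightarrow> odo_act G \<one> x = x"
  by (simp add: odo_act_def fun_eq_iff lcos_mult_one odometer_space_coord_subset)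

lemma odo_act_mult:
  "g \<in> carrier G \<Longrightarrow> h \<in> carrier G \<Longrightarrow> x \<in> XG \<Longrightarrow>
   odo_act G g (odo_act G h x) = odo_act G (g \<otimes> h) x"
  by (simp add: odo_act_def fun_eq_iff lcos_m_assoc odometer_space_coord_subset)

lemma odo_act_inj:
  assumes "g \<in> carrier G" "h \<in> carrier G" "x \<in> XG" "odo_act G g x = odo_act G h x"
  shows "g = h"
proof -
  have "odo_act G (inv h \<otimes> g) x = odo_act G (inv h \<otimes> h) x"
    using assms odo_act_mult[symmetric] by (metis inv_closed)
  then have "odo_act G (inv h \<otimes> g) x = x" using assms odo_act_one by simp
  then have "inv h \<otimes> g = \<one>" using free assms unfolding free_odometer_def by blast
  then show ?thesis using assms by (metis inv_closed inv_comm inv_inv inv_equality)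
qed

lemma odo_act_image_atom:
  assumes "g \<in> carrier G" "c \<in> cosets m"
  shows "odo_act G g ` atom G Gs m c = atom G Gs m (g <# c)"
proof
  show "odo_act G g ` atom G Gs m c \<subseteq> atom G Gs m (g <# c)"
    using assms odo_act_closed by (auto simp: atom_def odo_act_def)
  show "atom G Gs m (g <# c) \<subseteq> odo_act G g ` atom G Gs m c"
  proof
    fix y assume y: "y \<in> atom G Gs m (g <# c)"
    then have yX: "y \<in> XG" by (simp add: atom_def)
    define x where "x = odo_act G (inv g) y"
    have "x m = (inv g \<otimes> g) <# c"
      using y assms cosets_subset_carrier by (simp add: x_def odo_act_def atom_def lcos_m_assoc)
    then have "x \<in> atom G Gs m c"
      using assms yX odo_act_closed cosets_subset_carrier by (simp add: x_def atom_def lcos_mult_one)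
    moreover have "odo_act G g x = y" using assms yX by (simp add: x_def odo_act_mult odo_act_one)
    ultimately show "y \<in> odo_act G g ` atom G Gs m c" by blast
  qed
qed

lemma cocycle_eqI: "x \<in> XG \<Longrightarrow> g \<in> carrier G \<Longrightarrow> \<gamma> x = odo_act G g x \<Longrightarrow> cocycle G \<gamma> x = g"
  unfolding cocycle_def by (rule the_equality) (auto dest: odo_act_inj)

definition translates_atoms :: "nat \<Rightarrow> ((nat \<Rightarrow> 'a set) \<Rightarrow> (nat \<Rightarrow> 'a set)) \<Rightarrow> bool" where
  "translates_atoms N f \<longleftrightarrow>
     (\<forall>x\<in>XG. \<exists>g\<in>carrier G. \<forall>y\<in>atom G Gs N (x N). f y = odo_act G g y)"

lemma translates_atoms_mono:
  assumes "translates_atoms m f" "m \<le> N"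
  shows "translates_atoms N f"
  unfolding translates_atoms_def
proof
  fix x assume x: "x \<in> XG"
  then obtain g where "g \<in> carrier G" "\<forall>y\<in>atom G Gs m (x m). f y = odo_act G g y"
    using assms(1) unfolding translates_atoms_def by blast
  then show "\<exists>g\<in>carrier G. \<forall>y\<in>atom G Gs N (x N). f y = odo_act G g y"
    using atom_antimono[OF x assms(2)] by blast
qed

subsection \<open>The inverse limit topology\<close>

abbreviation "PX \<equiv> product_topology (\<lambda>n. discrete_topology (cosets n)) UNIV"

lemma odometer_space_subset_product: "XG \<subseteq> topspace PX"
  using odometer_space_coord by (auto simp: PiE_iff)

lemma topspace_odometer: "topspace TX = XG"
  unfolding odometer_topology_def using odometer_space_subset_product by auto

lemma continuous_map_coord: "continuous_map TX (discrete_topology (cosets m)) (\<lambda>x. x m)"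
  unfolding odometer_topology_def
  by (rule continuous_map_from_subtopology) (rule continuous_map_product_projection, simp)

lemma atom_eq_preimage: "atom G Gs m c = {x \<in> topspace TX. x m \<in> {c} \<inter> cosets m}"
  using odometer_space_coord by (auto simp: atom_def topspace_odometer)

lemma openin_atom: "openin TX (atom G Gs m c)"
  unfolding atom_eq_preimage by (rule openin_continuous_map_preimage[OF continuous_map_coord]) simp

lemma clopen_in_atom: "clopen_in TX (atom G Gs m c)"
  unfolding clopen_in_def atom_eq_preimage
  by (intro conjI openin_continuous_map_preimage[OF continuous_map_coord]
      closedin_continuous_map_preimage[OF continuous_map_coord]) simp_all

lemma openin_odometer_atom_subset:
  assumes U: "openin TX U" and x: "x \<in> U"
  shows "\<exists>m. atom G Gs m (x m) \<subseteq> U"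
proof -
  obtain S where S: "openin PX S" "U = S \<inter> XG"
    using U unfolding odometer_topology_def openin_subtopology by blast
  have xX: "x \<in> XG" and "x \<in> S" using x S(2) by blast+
  obtain V where V: "finite {i \<in> UNIV. V i \<noteq> topspace (discrete_topology (cosets i))}"
    "x \<in> Pi\<^sub>E UNIV V" "Pi\<^sub>E UNIV V \<subseteq> S"
    using S(1)[unfolded openin_product_topology_alt, rule_format, OF \<open>x \<in> S\<close>] by blast
  define F where "F = {i. V i \<noteq> cosets i}"
  have "finite F" using V(1) by (simp add: F_def)
  define m where "m = Max (insert 0 F)"
  have m: "i \<in> F \<Longrightarrow> i \<le> m" for i using \<open>finite F\<close> by (simp add: m_def)
  have "y \<in> U" if y: "y \<in> atom G Gs m (x m)" for y
  proof -
    have yX: "y \<in> XG" and ym: "y m = x m" using y by (auto simp: atom_def)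
    have "y i \<in> V i" for i
    proof (cases "i \<in> F")
      case True
      then have "y i = x i" using odometer_space_coord_eq[OF yX xX ym m[OF True]] by simp
      then show ?thesis using V(2) by (simp add: PiE_iff)
    next
      case False
      then show ?thesis using odometer_space_coord[OF yX] by (simp add: F_def)
    qed
    then have "y \<in> Pi\<^sub>E UNIV V" by (simp add: PiE_iff)
    then show ?thesis using V(3) S(2) yX by blast
  qed
  then show ?thesis by blast
qed

lemma openin_odometer_iff:
  "openin TX U \<longleftrightarrow> U \<subseteq> XG \<and> (\<forall>x\<in>U. \<exists>m. atom G Gs m (x m) \<subseteq> U)"
proof
  assume U: "openin TX U"
  have "U \<subseteq> XG" using openin_subset[OF U] by (simp add: topspace_odometer)
  with openin_odometer_atom_subset[OF U]
  show "U \<subseteq> XG \<and> (\<forall>x\<in>U. \<exists>m. atom G Gs m (x m) \<subseteq> U)" by blast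
next
  assume U: "U \<subseteq> XG \<and> (\<forall>x\<in>U. \<exists>m. atom G Gs m (x m) \<subseteq> U)"
  show "openin TX U"
  proof (subst openin_subopen, intro ballI)
    fix x assume "x \<in> U"
    then obtain m where "atom G Gs m (x m) \<subseteq> U" "x \<in> atom G Gs m (x m)"
      using U mem_atom_self by blast
    then show "\<exists>T. openin TX T \<and> x \<in> T \<and> T \<subseteq> U" using openin_atom by blast
  qed
qed

lemma continuous_map_translates_atoms:
  assumes maps: "\<And>x. x \<in> XG \<Longrightarrow> f x \<in> XG" and f: "translates_atoms N f"
  shows "continuous_map TX TX f"
  unfolding continuous_map_def topspace_odometer
proof (intro conjI allI impI)
  show "f \<in> XG \<rightarrow> XG" using maps by blast
  fix U assume U: "openin TX U"
  show "openin TX {x \<in> XG. f x \<in> U}"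
    unfolding openin_odometer_iff
  proof (intro conjI ballI)
    fix x assume "x \<in> {x \<in> XG. f x \<in> U}"
    then have xX: "x \<in> XG" and fxU: "f x \<in> U" by auto
    obtain g where g: "g \<in> carrier G" "\<forall>y\<in>atom G Gs N (x N). f y = odo_act G g y"
      using f xX unfolding translates_atoms_def by blast
    obtain m where m: "atom G Gs m (f x m) \<subseteq> U" using U fxU unfolding openin_odometer_iff by blast
    have "f y \<in> U" if y: "y \<in> atom G Gs (max N m) (x (max N m))" for y
    proof -
      have "atom G Gs (max N m) (x (max N m)) \<subseteq> atom G Gs N (x N) \<inter> atom G Gs m (x m)"
        using atom_antimono[OF xX] by simp
      then have yN: "y \<in> atom G Gs N (x N)" and ym: "y \<in> atom G Gs m (x m)" using y by blast+
      have "f y = odo_act G g y" "f x = odo_act G g x" using g yN mem_atom_self[OF xX] by auto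
      then have "f y m = f x m" using ym by (simp add: odo_act_def atom_def)
      then have "f y \<in> atom G Gs m (f x m)" using maps ym by (simp add: atom_def)
      then show ?thesis using m by blast
    qed
    moreover have "atom G Gs (max N m) (x (max N m)) \<subseteq> XG" by (auto simp: atom_def)
    ultimately show "\<exists>k. atom G Gs k (x k) \<subseteq> {x \<in> XG. f x \<in> U}" by blast
  qed auto
qed

lemma closedin_odometer_space: "closedin PX XG"
proof -
  define pair where "pair n x = (x n, x (Suc n))" for n and x :: "nat \<Rightarrow> 'a set"
  have X_eq: "XG = (\<Inter>n. {x \<in> topspace PX. pair n x \<in> {(c, d). d \<subseteq> c} \<inter> (cosets n \<times> cosets (Suc n))})"
  proof (intro equalityI subsetI)
    fix x assume "x \<in> XG"
    then show "x \<in> (\<Inter>n. {x \<in> topspace PX. pair n x \<in> {(c, d). d \<subseteq> c} \<inter> (cosets n \<times> cosets (Suc n))})"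
      using odometer_space_subset_product odometer_space_coord unfolding odometer_space_def pair_def by blast
  next
    fix x assume "x \<in> (\<Inter>n. {x \<in> topspace PX. pair n x \<in> {(c, d). d \<subseteq> c} \<inter> (cosets n \<times> cosets (Suc n))})"
    then show "x \<in> XG" unfolding odometer_space_def pair_def by blast
  qed
  have "continuous_map PX (discrete_topology (cosets n \<times> cosets (Suc n))) (pair n)" for n
    unfolding prod_topology_discrete_topology pair_def
    by (intro continuous_map_pairedI continuous_map_product_projection) (rule UNIV_I)+
  then have "closedin PX {x \<in> topspace PX. pair n x \<in> {(c, d). d \<subseteq> c} \<inter> (cosets n \<times> cosets (Suc n))}"
    for n by (rule closedin_continuous_map_preimage) simp
  then show ?thesis unfolding X_eq by (intro closedin_Inter) auto
qed

lemma compact_space_odometer: "compact_space TX"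
proof -
  have "compact_space PX"
    unfolding compact_space_product_topology using finite_index
    by (simp add: compact_space_discrete_topology)
  then show ?thesis unfolding odometer_topology_def
    by (intro compact_space_subtopology closedin_compact_space closedin_odometer_space)
qed

lemma full_group_locally_translates:
  assumes "\<gamma> \<in> full_group_carrier G Gs" "x \<in> XG"
  shows "\<exists>m. \<exists>g\<in>carrier G. \<forall>y\<in>atom G Gs m (x m). \<gamma> y = odo_act G g y"
proof -
  obtain U g where U: "clopen_in TX U" "x \<in> U" "g \<in> carrier G" "\<forall>y\<in>U. \<gamma> y = odo_act G g y"
    using assms unfolding full_group_carrier_def by blast
  then obtain m where "atom G Gs m (x m) \<subseteq> U"
    unfolding clopen_in_def openin_odometer_iff by blast
  then show ?thesis using U by blast
qed

lemma full_group_surj_odometer: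
  assumes "\<gamma> \<in> full_group_carrier G Gs"
  shows "\<gamma> ` XG = XG"
proof -
  have "homeomorphic_map TX TX \<gamma>" using assms by (simp add: full_group_carrier_def)
  from homeomorphic_imp_surjective_map[OF this] show ?thesis by (simp add: topspace_odometer)
qed

lemma full_group_maps_odometer: "\<gamma> \<in> full_group_carrier G Gs \<Longrightarrow> x \<in> XG \<Longrightarrow> \<gamma> x \<in> XG"
  using full_group_surj_odometer by blast

lemma cocycle_full_group:
  assumes "\<gamma> \<in> full_group_carrier G Gs" "x \<in> XG"
  shows "cocycle G \<gamma> x \<in> carrier G" "\<gamma> x = odo_act G (cocycle G \<gamma> x) x"
proof -
  obtain m g where g: "g \<in> carrier G" "\<forall>y\<in>atom G Gs m (x m). \<gamma> y = odo_act G g y"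
    using full_group_locally_translates[OF assms] by blast
  then have "\<gamma> x = odo_act G g x" using assms(2) mem_atom_self by blast
  then show "cocycle G \<gamma> x \<in> carrier G" "\<gamma> x = odo_act G (cocycle G \<gamma> x) x"
    using cocycle_eqI[OF assms(2) g(1)] g(1) by simp_all
qed

text \<open>Compactness: finitely many atoms, on each of which \<open>\<gamma>\<close> is a translation, cover the space,
  and the finest of their levels works everywhere.\<close>

lemma full_group_translates_atoms:
  assumes \<gamma>: "\<gamma> \<in> full_group_carrier G Gs"
  shows "\<exists>N. translates_atoms N \<gamma>"
proof -
  define \<U> where "\<U> = {A. \<exists>m c. A = atom G Gs m c \<and> (\<exists>g\<in>carrier G. \<forall>y\<in>A. \<gamma> y = odo_act G g y)}"
  have "topspace TX \<subseteq> \<Union>\<U>"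
  proof
    fix x assume "x \<in> topspace TX"
    then have xX: "x \<in> XG" using topspace_odometer by simp
    obtain m g where "g \<in> carrier G" "\<forall>y\<in>atom G Gs m (x m). \<gamma> y = odo_act G g y"
      using full_group_locally_translates[OF \<gamma> xX] by blast
    then have "atom G Gs m (x m) \<in> \<U>" unfolding \<U>_def by blast
    then show "x \<in> \<Union>\<U>" using mem_atom_self[OF xX] by blast
  qed
  moreover have "\<forall>U\<in>\<U>. openin TX U" unfolding \<U>_def using openin_atom by blast
  ultimately obtain \<F> where \<F>: "finite \<F>" "\<F> \<subseteq> \<U>" "topspace TX \<subseteq> \<Union>\<F>"
    using compact_space_odometer unfolding compact_space_alt by meson
  then have "\<forall>A\<in>\<F>. \<exists>m c. A = atom G Gs m c \<and> (\<exists>g\<in>carrier G. \<forall>y\<in>A. \<gamma> y = odo_act G g y)"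
    unfolding \<U>_def by blast
  then obtain lvl where lvl: "\<forall>A\<in>\<F>. \<exists>c. A = atom G Gs (lvl A) c \<and> (\<exists>g\<in>carrier G. \<forall>y\<in>A. \<gamma> y = odo_act G g y)"
    by metis
  define N where "N = Max (insert 0 (lvl ` \<F>))"
  have N: "A \<in> \<F> \<Longrightarrow> lvl A \<le> N" for A using \<F>(1) by (simp add: N_def)
  have "\<exists>g\<in>carrier G. \<forall>y\<in>atom G Gs N (x N). \<gamma> y = odo_act G g y" if xX: "x \<in> XG" for x
  proof -
    obtain A where A: "A \<in> \<F>" "x \<in> A" using \<F>(3) xX topspace_odometer by blast
    then obtain c g where cg: "A = atom G Gs (lvl A) c" "g \<in> carrier G" "\<forall>y\<in>A. \<gamma> y = odo_act G g y"
      using lvl by blast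
    have "x (lvl A) = c" using A(2) by (subst (asm) cg(1)) (simp add: atom_def)
    then have "atom G Gs (lvl A) (x (lvl A)) = A" by (simp add: cg(1)[symmetric])
    then have "atom G Gs N (x N) \<subseteq> A" using atom_antimono[OF xX N[OF A(1)]] by simp
    then show ?thesis using cg by blast
  qed
  then show ?thesis unfolding translates_atoms_def by blast
qed

lemma full_group_level_iff:
  assumes \<gamma>: "\<gamma> \<in> full_group_carrier G Gs"
  shows "\<gamma> \<in> full_group_level G Gs N \<longleftrightarrow> translates_atoms N \<gamma>"
proof
  assume lvl: "\<gamma> \<in> full_group_level G Gs N"
  show "translates_atoms N \<gamma>"
    unfolding translates_atoms_def
  proof
    fix x assume xX: "x \<in> XG"
    have "\<gamma> y = odo_act G (cocycle G \<gamma> x) y" if y: "y \<in> atom G Gs N (x N)" for y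
    proof -
      have "cocycle G \<gamma> y = cocycle G \<gamma> x"
        using lvl y mem_atom_self[OF xX] odometer_space_coord[OF xX]
        unfolding full_group_level_def by blast
      then show ?thesis using cocycle_full_group[OF \<gamma>] y by (simp add: atom_def)
    qed
    then show "\<exists>g\<in>carrier G. \<forall>y\<in>atom G Gs N (x N). \<gamma> y = odo_act G g y"
      using cocycle_full_group(1)[OF \<gamma> xX] by blast
  qed
next
  assume tr: "translates_atoms N \<gamma>"
  have "cocycle G \<gamma> x = cocycle G \<gamma> y" if "x \<in> atom G Gs N c" "y \<in> atom G Gs N c" for c x y
  proof -
    have xX: "x \<in> XG" and yX: "y \<in> XG" and y: "y \<in> atom G Gs N (x N)"
      using that by (auto simp: atom_def)
    obtain g where g: "g \<in> carrier G" "\<forall>z\<in>atom G Gs N (x N). \<gamma> z = odo_act G g z"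
      using tr xX unfolding translates_atoms_def by blast
    show ?thesis using cocycle_eqI[OF xX g(1)] cocycle_eqI[OF yX g(1)] g(2) y mem_atom_self[OF xX]
      by simp
  qed
  then show "\<gamma> \<in> full_group_level G Gs N" using \<gamma> unfolding full_group_level_def by blast
qed

lemma full_group_level_mono: "full_group_level G Gs n \<subseteq> full_group_level G Gs (Suc n)"
proof
  fix \<gamma> assume \<gamma>: "\<gamma> \<in> full_group_level G Gs n"
  then have \<gamma>c: "\<gamma> \<in> full_group_carrier G Gs" by (simp add: full_group_level_def)
  then have "translates_atoms n \<gamma>" using \<gamma> full_group_level_iff by blast
  then have "translates_atoms (Suc n) \<gamma>" by (rule translates_atoms_mono) simp
  then show "\<gamma> \<in> full_group_level G Gs (Suc n)" using full_group_level_iff[OF \<gamma>c] by blast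
qed

lemma full_group_eq_Union_levels: "full_group_carrier G Gs = (\<Union>n. full_group_level G Gs n)"
proof
  show "full_group_carrier G Gs \<subseteq> (\<Union>n. full_group_level G Gs n)"
  proof
    fix \<gamma> assume \<gamma>: "\<gamma> \<in> full_group_carrier G Gs"
    then obtain N where "translates_atoms N \<gamma>" using full_group_translates_atoms by blast
    then show "\<gamma> \<in> (\<Union>n. full_group_level G Gs n)" using full_group_level_iff[OF \<gamma>] by blast
  qed
  show "(\<Union>n. full_group_level G Gs n) \<subseteq> full_group_carrier G Gs"
    by (auto simp: full_group_level_def)
qed

end

locale odometer_level = free_odometer_action +
  fixes n :: nat and e :: "nat \<Rightarrow> 'a set"
  assumes enum_cosets: "bij_betw e {0..<card (left_cosets G (Gs n))} (left_cosets G (Gs n))"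
begin

abbreviation "p \<equiv> card (cosets n)"
abbreviation "I \<equiv> {0..<p}"

lemma enum_in_cosets: "i < p \<Longrightarrow> e i \<in> cosets n"
  using bij_betwE[OF enum_cosets] by simp

lemma enum_subset_carrier: "i < p \<Longrightarrow> e i \<subseteq> carrier G"
  using cosets_subset_carrier enum_in_cosets by blast

lemma enum_inj: "i < p \<Longrightarrow> j < p \<Longrightarrow> e i = e j \<Longrightarrow> i = j"
  using enum_cosets unfolding bij_betw_def inj_on_def by auto

definition coset_rep :: "nat \<Rightarrow> 'a" where
  "coset_rep i = (SOME a. a \<in> carrier G \<and> e i = a <# Gs n)"

lemma coset_rep: "i < p \<Longrightarrow> coset_rep i \<in> carrier G \<and> e i = coset_rep i <# Gs n"
proof -
  assume "i < p"
  then have "\<exists>a. a \<in> carrier G \<and> e i = a <# Gs n" using enum_in_cosets mem_cosets_iff by blast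
  then show ?thesis unfolding coset_rep_def by (rule someI_ex)
qed

definition base_point :: "nat \<Rightarrow> nat \<Rightarrow> 'a set" where
  "base_point i = (\<lambda>k. coset_rep i <# Gs k)"

lemma base_point_in_atom:
  assumes i: "i < p"
  shows "base_point i \<in> atom G Gs n (e i)"
proof -
  have "base_point i \<in> XG"
    unfolding odometer_space_def base_point_def
  proof (intro CollectI conjI allI)
    fix k
    show "coset_rep i <# Gs k \<in> cosets k" using coset_rep[OF i] by (simp add: left_cosets_def)
    show "coset_rep i <# Gs (Suc k) \<subseteq> coset_rep i <# Gs k" by (rule l_coset_mono[OF Gs_decreasing])
  qed
  then show ?thesis using coset_rep[OF i] by (simp add: atom_def base_point_def)
qed

definition atom_index :: "(nat \<Rightarrow> 'a set) \<Rightarrow> nat" where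
  "atom_index x = inv_into I e (x n)"

lemma atom_index: "x \<in> XG \<Longrightarrow> atom_index x < p \<and> e (atom_index x) = x n"
proof -
  assume "x \<in> XG"
  then have "x n \<in> e ` I" using odometer_space_coord bij_betw_imp_surj_on[OF enum_cosets] by simp
  then show ?thesis
    unfolding atom_index_def using inv_into_into[of "x n" e I] f_inv_into_f[of "x n" e I] by simp
qed

lemma atom_index_eqI:
  assumes "i < p" "x \<in> atom G Gs n (e i)"
  shows "atom_index x = i"
proof -
  have "x \<in> XG" "x n = e i" using assms(2) by (auto simp: atom_def)
  then have "atom_index x < p" "e (atom_index x) = e i" using atom_index by auto
  then show ?thesis using enum_inj assms(1) by blast
qed

lemma mem_atom_atom_index: "x \<in> XG \<Longrightarrow> x \<in> atom G Gs n (e (atom_index x))"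
  using atom_index by (simp add: atom_def)

subsection \<open>Piecewise translations of the atoms of level \<open>n\<close>\<close>

definition atom_transfer :: "(nat \<Rightarrow> 'a) \<Rightarrow> (nat \<Rightarrow> nat) \<Rightarrow> bool" where
  "atom_transfer g \<sigma> \<longleftrightarrow> \<sigma> permutes I \<and> (\<forall>i<p. g i \<in> carrier G \<and> g i <# e i = e (\<sigma> i))"

lemma atom_transferD:
  assumes "atom_transfer g \<sigma>" "i < p"
  shows "g i \<in> carrier G" "g i <# e i = e (\<sigma> i)" "\<sigma> i < p"
  using assms permutes_in_image[of \<sigma> I i] by (auto simp: atom_transfer_def)

definition piecewise_act :: "(nat \<Rightarrow> 'a) \<Rightarrow> (nat \<Rightarrow> 'a set) \<Rightarrow> (nat \<Rightarrow> 'a set)" where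
  "piecewise_act g x = (if x \<in> XG then odo_act G (g (atom_index x)) x else x)"

lemma piecewise_act_cong: "(\<And>i. i < p \<Longrightarrow> g i = h i) \<Longrightarrow> piecewise_act g = piecewise_act h"
  unfolding piecewise_act_def using atom_index by (intro ext) auto

lemma piecewise_act_on_atom:
  "i < p \<Longrightarrow> x \<in> atom G Gs n (e i) \<Longrightarrow> piecewise_act g x = odo_act G (g i) x"
  using atom_index_eqI by (auto simp: piecewise_act_def atom_def)

lemma piecewise_act_image:
  assumes "atom_transfer g \<sigma>" "i < p"
  shows "piecewise_act g ` atom G Gs n (e i) = atom G Gs n (e (\<sigma> i))"
proof -
  have "piecewise_act g ` atom G Gs n (e i) = odo_act G (g i) ` atom G Gs n (e i)"
    using piecewise_act_on_atom[OF assms(2)] by (rule image_cong[OF refl])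
  also have "\<dots> = atom G Gs n (e (\<sigma> i))"
    using odo_act_image_atom enum_in_cosets atom_transferD assms by simp
  finally show ?thesis .
qed

lemma piecewise_act_closed: "atom_transfer g \<sigma> \<Longrightarrow> x \<in> XG \<Longrightarrow> piecewise_act g x \<in> XG"
  using atom_index atom_transferD(1) odo_act_closed by (simp add: piecewise_act_def)

lemma translates_atoms_piecewise_act:
  assumes "atom_transfer g \<sigma>"
  shows "translates_atoms n (piecewise_act g)"
  unfolding translates_atoms_def
proof
  fix x assume "x \<in> XG"
  then have "atom_index x < p" "e (atom_index x) = x n" using atom_index by auto
  then show "\<exists>h\<in>carrier G. \<forall>y\<in>atom G Gs n (x n). piecewise_act g y = odo_act G h y"
    using piecewise_act_on_atom[of "atom_index x"] atom_transferD(1)[OF assms] by metis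
qed

lemma atom_transfer_comp:
  assumes g: "atom_transfer g \<sigma>" and h: "atom_transfer h \<tau>"
  shows "atom_transfer (\<lambda>i. g (\<tau> i) \<otimes> h i) (\<sigma> \<circ> \<tau>)"
  unfolding atom_transfer_def
proof (intro conjI allI impI)
  show "\<sigma> \<circ> \<tau> permutes I" using g h permutes_compose by (auto simp: atom_transfer_def)
  fix i assume i: "i < p"
  note gh = atom_transferD[OF g atom_transferD(3)[OF h i]] atom_transferD[OF h i]
  show "g (\<tau> i) \<otimes> h i \<in> carrier G" using gh by simp
  have "(g (\<tau> i) \<otimes> h i) <# e i = g (\<tau> i) <# (h i <# e i)"
    using gh(1,4) i by (simp add: lcos_m_assoc enum_subset_carrier)
  then show "(g (\<tau> i) \<otimes> h i) <# e i = e ((\<sigma> \<circ> \<tau>) i)" using gh by simp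
qed

lemma piecewise_act_comp:
  assumes g: "atom_transfer g \<sigma>" and h: "atom_transfer h \<tau>"
  shows "piecewise_act g \<circ> piecewise_act h = piecewise_act (\<lambda>i. g (\<tau> i) \<otimes> h i)"
proof
  fix x show "(piecewise_act g \<circ> piecewise_act h) x = piecewise_act (\<lambda>i. g (\<tau> i) \<otimes> h i) x"
  proof (cases "x \<in> XG")
    case False then show ?thesis by (simp add: piecewise_act_def)
  next
    case True
    define i where "i = atom_index x"
    have i: "i < p" "x \<in> atom G Gs n (e i)" using atom_index mem_atom_atom_index True i_def by auto
    have hx: "piecewise_act h x \<in> atom G Gs n (e (\<tau> i))"
      using piecewise_act_image[OF h i(1)] i(2) by blast
    have "piecewise_act g (piecewise_act h x) = odo_act G (g (\<tau> i)) (odo_act G (h i) x)"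
      using piecewise_act_on_atom[OF atom_transferD(3)[OF h i(1)] hx] piecewise_act_on_atom[OF i] by simp
    also have "\<dots> = odo_act G (g (\<tau> i) \<otimes> h i) x"
      using odo_act_mult atom_transferD(1) atom_transferD(3) g h i True by simp
    also have "\<dots> = piecewise_act (\<lambda>i. g (\<tau> i) \<otimes> h i) x"
      using piecewise_act_on_atom[OF i] by simp
    finally show ?thesis by simp
  qed
qed

lemma atom_transfer_one: "atom_transfer (\<lambda>i. \<one>) id"
  by (simp add: atom_transfer_def lcos_mult_one enum_subset_carrier)

lemma piecewise_act_one: "piecewise_act (\<lambda>i. \<one>) = id"
  by (simp add: piecewise_act_def odo_act_one fun_eq_iff)

definition inverse_transfer :: "(nat \<Rightarrow> 'a) \<Rightarrow> (nat \<Rightarrow> nat) \<Rightarrow> nat \<Rightarrow> 'a" where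
  "inverse_transfer g \<sigma> i = inv (g (Hilbert_Choice.inv \<sigma> i))"

lemma atom_transfer_inverse:
  assumes g: "atom_transfer g \<sigma>"
  shows "atom_transfer (inverse_transfer g \<sigma>) (Hilbert_Choice.inv \<sigma>)"
  unfolding atom_transfer_def
proof (intro conjI allI impI)
  have perm: "\<sigma> permutes I" using g by (simp add: atom_transfer_def)
  then show "Hilbert_Choice.inv \<sigma> permutes I" by (rule permutes_inv)
  fix i assume "i < p"
  define k where "k = Hilbert_Choice.inv \<sigma> i"
  have k: "k < p" "\<sigma> k = i"
    using permutes_in_image[OF permutes_inv[OF perm], of i] \<open>i < p\<close> permutes_inverses(1)[OF perm]
    by (auto simp: k_def)
  have gk: "g k \<in> carrier G" "g k <# e k = e i" using atom_transferD[OF g k(1)] k(2) by auto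
  show "inverse_transfer g \<sigma> i \<in> carrier G" using gk(1) by (simp add: inverse_transfer_def k_def[symmetric])
  have "inv (g k) <# e i = inv (g k) <# (g k <# e k)" using gk(2) by simp
  also have "\<dots> = e k"
    using gk(1) k(1) by (simp add: lcos_m_assoc enum_subset_carrier lcos_mult_one)
  finally show "inverse_transfer g \<sigma> i <# e i = e (Hilbert_Choice.inv \<sigma> i)"
    by (simp add: inverse_transfer_def k_def[symmetric])
qed

lemma piecewise_act_inverse:
  assumes g: "atom_transfer g \<sigma>"
  shows "piecewise_act (inverse_transfer g \<sigma>) \<circ> piecewise_act g = id"
    and "piecewise_act g \<circ> piecewise_act (inverse_transfer g \<sigma>) = id"
proof -
  have perm: "\<sigma> permutes I" using g by (simp add: atom_transfer_def)
  have "piecewise_act (inverse_transfer g \<sigma>) \<circ> piecewise_act g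
      = piecewise_act (\<lambda>i. inverse_transfer g \<sigma> (\<sigma> i) \<otimes> g i)"
    by (rule piecewise_act_comp[OF atom_transfer_inverse[OF g] g])
  also have "\<dots> = piecewise_act (\<lambda>i. \<one>)"
    by (rule piecewise_act_cong)
      (use atom_transferD(1)[OF g] in \<open>simp add: inverse_transfer_def permutes_inverses(2)[OF perm]\<close>)
  finally show "piecewise_act (inverse_transfer g \<sigma>) \<circ> piecewise_act g = id"
    by (simp add: piecewise_act_one)
  have "piecewise_act g \<circ> piecewise_act (inverse_transfer g \<sigma>)
      = piecewise_act (\<lambda>i. g (Hilbert_Choice.inv \<sigma> i) \<otimes> inverse_transfer g \<sigma> i)"
    by (rule piecewise_act_comp[OF g atom_transfer_inverse[OF g]])
  also have "\<dots> = piecewise_act (\<lambda>i. \<one>)"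
  proof (rule piecewise_act_cong)
    fix i assume "i < p"
    then have "Hilbert_Choice.inv \<sigma> i < p" using permutes_in_image[OF permutes_inv[OF perm]] by simp
    then show "g (Hilbert_Choice.inv \<sigma> i) \<otimes> inverse_transfer g \<sigma> i = \<one>"
      using atom_transferD(1)[OF g] by (simp add: inverse_transfer_def)
  qed
  finally show "piecewise_act g \<circ> piecewise_act (inverse_transfer g \<sigma>) = id"
    by (simp add: piecewise_act_one)
qed

lemma continuous_map_piecewise_act: "atom_transfer g \<sigma> \<Longrightarrow> continuous_map TX TX (piecewise_act g)"
  using continuous_map_translates_atoms piecewise_act_closed translates_atoms_piecewise_act by blast

lemma piecewise_act_in_full_group:
  assumes g: "atom_transfer g \<sigma>"
  shows "piecewise_act g \<in> full_group_carrier G Gs"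
proof -
  note g' = atom_transfer_inverse[OF g]
  have "homeomorphic_maps TX TX (piecewise_act g) (piecewise_act (inverse_transfer g \<sigma>))"
    unfolding homeomorphic_maps_def
    using continuous_map_piecewise_act[OF g] continuous_map_piecewise_act[OF g']
      pointfree_idE[OF piecewise_act_inverse(1)[OF g]] pointfree_idE[OF piecewise_act_inverse(2)[OF g]]
    by blast
  then have "homeomorphic_map TX TX (piecewise_act g)" using homeomorphic_map_maps by blast
  moreover have "\<forall>x. x \<notin> XG \<longrightarrow> piecewise_act g x = x" by (simp add: piecewise_act_def)
  moreover have "\<forall>x\<in>XG. \<exists>U h. clopen_in TX U \<and> x \<in> U \<and> h \<in> carrier G
      \<and> (\<forall>y\<in>U. piecewise_act g y = odo_act G h y)"
    using translates_atoms_piecewise_act[OF g] clopen_in_atom mem_atom_self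
    unfolding translates_atoms_def by blast
  ultimately show ?thesis unfolding full_group_carrier_def by blast
qed

lemma piecewise_act_in_level: "atom_transfer g \<sigma> \<Longrightarrow> piecewise_act g \<in> full_group_level G Gs n"
  using full_group_level_iff piecewise_act_in_full_group translates_atoms_piecewise_act by blast

subsection \<open>Every element of \<open>[[G]]\<^sub>n\<close> is a piecewise translation\<close>

definition level_cocycle :: "((nat \<Rightarrow> 'a set) \<Rightarrow> (nat \<Rightarrow> 'a set)) \<Rightarrow> nat \<Rightarrow> 'a" where
  "level_cocycle \<gamma> i = cocycle G \<gamma> (base_point i)"

definition level_perm :: "((nat \<Rightarrow> 'a set) \<Rightarrow> (nat \<Rightarrow> 'a set)) \<Rightarrow> nat \<Rightarrow> nat" where
  "level_perm \<gamma> i = (if i < p then atom_index (\<gamma> (base_point i)) else i)"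

lemma level_acts_on_atom:
  assumes \<gamma>: "\<gamma> \<in> full_group_level G Gs n" and i: "i < p" and x: "x \<in> atom G Gs n (e i)"
  shows "\<gamma> x = odo_act G (level_cocycle \<gamma> i) x" "level_cocycle \<gamma> i \<in> carrier G"
proof -
  have "\<gamma> \<in> full_group_carrier G Gs" using \<gamma> by (simp add: full_group_level_def)
  then have "translates_atoms n \<gamma>" using \<gamma> full_group_level_iff by blast
  moreover have pt: "base_point i \<in> XG" "base_point i n = e i"
    using base_point_in_atom[OF i] by (auto simp: atom_def)
  ultimately obtain g where g: "g \<in> carrier G" "\<forall>y\<in>atom G Gs n (base_point i n). \<gamma> y = odo_act G g y"
    unfolding translates_atoms_def by blast
  have gi: "\<forall>y\<in>atom G Gs n (e i). \<gamma> y = odo_act G g y" using g(2) pt(2) by simp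
  have "level_cocycle \<gamma> i = g"
    unfolding level_cocycle_def using cocycle_eqI[OF pt(1) g(1)] gi base_point_in_atom[OF i] by blast
  then show "\<gamma> x = odo_act G (level_cocycle \<gamma> i) x" "level_cocycle \<gamma> i \<in> carrier G"
    using g(1) gi x by auto
qed

lemma level_cocycle_transfers:
  assumes \<gamma>: "\<gamma> \<in> full_group_level G Gs n" and i: "i < p"
  shows "level_perm \<gamma> i < p" "level_cocycle \<gamma> i <# e i = e (level_perm \<gamma> i)"
proof -
  have "\<gamma> (base_point i) = odo_act G (level_cocycle \<gamma> i) (base_point i)"
    using level_acts_on_atom(1)[OF \<gamma> i base_point_in_atom[OF i]] .
  moreover have "\<gamma> (base_point i) \<in> XG"
    using \<gamma> full_group_maps_odometer base_point_in_atom[OF i] by (simp add: full_group_level_def atom_def)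
  ultimately show "level_perm \<gamma> i < p" "level_cocycle \<gamma> i <# e i = e (level_perm \<gamma> i)"
    using atom_index[of "\<gamma> (base_point i)"] base_point_in_atom[OF i] i
    by (simp_all add: level_perm_def odo_act_def atom_def)
qed

lemma level_perm_permutes:
  assumes \<gamma>: "\<gamma> \<in> full_group_level G Gs n"
  shows "level_perm \<gamma> permutes I"
proof -
  have \<gamma>c: "\<gamma> \<in> full_group_carrier G Gs" using \<gamma> by (simp add: full_group_level_def)
  have "level_perm \<gamma> ` I = I"
  proof
    show "level_perm \<gamma> ` I \<subseteq> I" using level_cocycle_transfers(1)[OF \<gamma>] by auto
    show "I \<subseteq> level_perm \<gamma> ` I"
    proof
      fix j assume "j \<in> I"
      then have j: "j < p" by simp
      have "base_point j \<in> XG" using base_point_in_atom[OF j] by (simp add: atom_def)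
      then have "base_point j \<in> \<gamma> ` XG" using full_group_surj_odometer[OF \<gamma>c] by simp
      then obtain x where x: "base_point j = \<gamma> x" "x \<in> XG" by (rule imageE)
      define i where "i = atom_index x"
      have i: "i < p" "x \<in> atom G Gs n (e i)"
        using atom_index[OF x(2)] mem_atom_atom_index[OF x(2)] by (auto simp: i_def)
      have "e j = \<gamma> x n" using x(1) base_point_in_atom[OF j] by (simp add: atom_def)
      also have "\<dots> = level_cocycle \<gamma> i <# e i"
        using level_acts_on_atom(1)[OF \<gamma> i] i(2) by (simp add: odo_act_def atom_def)
      also have "\<dots> = e (level_perm \<gamma> i)" using level_cocycle_transfers(2)[OF \<gamma> i(1)] .
      finally have "j = level_perm \<gamma> i" by (rule enum_inj[OF j level_cocycle_transfers(1)[OF \<gamma> i(1)]])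
      then show "j \<in> level_perm \<gamma> ` I" using i(1) by simp
    qed
  qed
  then have "bij_betw (level_perm \<gamma>) I I"
    unfolding bij_betw_def using eq_card_imp_inj_on[of I "level_perm \<gamma>"] by simp
  then show ?thesis by (rule bij_imp_permutes) (simp add: level_perm_def)
qed

lemma level_atom_transfer:
  assumes "\<gamma> \<in> full_group_level G Gs n"
  shows "atom_transfer (level_cocycle \<gamma>) (level_perm \<gamma>)"
  unfolding atom_transfer_def
proof (intro conjI allI impI)
  show "level_perm \<gamma> permutes I" by (rule level_perm_permutes[OF assms])
  fix i assume i: "i < p"
  show "level_cocycle \<gamma> i \<in> carrier G"
    by (rule level_acts_on_atom(2)[OF assms i base_point_in_atom[OF i]])
  show "level_cocycle \<gamma> i <# e i = e (level_perm \<gamma> i)"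
    by (rule level_cocycle_transfers(2)[OF assms i])
qed

lemma level_eq_piecewise_act:
  assumes \<gamma>: "\<gamma> \<in> full_group_level G Gs n"
  shows "\<gamma> = piecewise_act (level_cocycle \<gamma>)"
proof
  fix x show "\<gamma> x = piecewise_act (level_cocycle \<gamma>) x"
  proof (cases "x \<in> XG")
    case False
    have "\<gamma> \<in> full_group_carrier G Gs" using \<gamma> by (simp add: full_group_level_def)
    then show ?thesis using False by (simp add: piecewise_act_def full_group_carrier_def)
  next
    case True
    define i where "i = atom_index x"
    have i: "i < p" "x \<in> atom G Gs n (e i)"
      using atom_index[OF True] mem_atom_atom_index[OF True] by (auto simp: i_def)
    show ?thesis using level_acts_on_atom(1)[OF \<gamma> i] piecewise_act_on_atom[OF i] by simp
  qed
qed

lemma full_group_levelE: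
  assumes "\<gamma> \<in> full_group_level G Gs n"
  obtains g \<sigma> where "atom_transfer g \<sigma>" "\<gamma> = piecewise_act g"
  using level_atom_transfer[OF assms] level_eq_piecewise_act[OF assms] by (rule that)

lemma level_cocycle_piecewise_act:
  assumes g: "atom_transfer g \<sigma>" and i: "i < p"
  shows "level_cocycle (piecewise_act g) i = g i"
proof -
  have "base_point i \<in> XG" using base_point_in_atom[OF i] by (simp add: atom_def)
  then show ?thesis
    unfolding level_cocycle_def
    using cocycle_eqI atom_transferD(1)[OF g i] piecewise_act_on_atom[OF i base_point_in_atom[OF i]]
    by blast
qed

lemma level_perm_piecewise_act:
  assumes g: "atom_transfer g \<sigma>"
  shows "level_perm (piecewise_act g) = \<sigma>"
proof
  fix i show "level_perm (piecewise_act g) i = \<sigma> i"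
  proof (cases "i < p")
    case True
    have "piecewise_act g (base_point i) \<in> atom G Gs n (e (\<sigma> i))"
      using piecewise_act_image[OF g True] base_point_in_atom[OF True] by blast
    then show ?thesis
      using atom_index_eqI atom_transferD(3)[OF g True] True by (simp add: level_perm_def)
  next
    case False
    then show ?thesis using g permutes_not_in[of \<sigma> I i] by (simp add: level_perm_def atom_transfer_def)
  qed
qed

lemma full_group_level_subgroup: "subgroup (full_group_level G Gs n) (full_group G Gs)"
proof (rule subgroup.intro)
  show "full_group_level G Gs n \<subseteq> carrier (full_group G Gs)"
    by (auto simp: full_group_def full_group_level_def)
  show "\<one>\<^bsub>full_group G Gs\<^esub> \<in> full_group_level G Gs n"
    using piecewise_act_in_level[OF atom_transfer_one] by (simp add: piecewise_act_one full_group_def)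
next
  fix \<gamma> \<delta> assume \<gamma>: "\<gamma> \<in> full_group_level G Gs n" and \<delta>: "\<delta> \<in> full_group_level G Gs n"
  obtain g \<sigma> where g: "atom_transfer g \<sigma>" "\<gamma> = piecewise_act g" using \<gamma> by (rule full_group_levelE)
  obtain h \<tau> where h: "atom_transfer h \<tau>" "\<delta> = piecewise_act h" using \<delta> by (rule full_group_levelE)
  show "\<gamma> \<otimes>\<^bsub>full_group G Gs\<^esub> \<delta> \<in> full_group_level G Gs n"
    using piecewise_act_in_level[OF atom_transfer_comp[OF g(1) h(1)]] piecewise_act_comp[OF g(1) h(1)]
    by (simp add: full_group_def g(2) h(2))
next
  fix \<gamma> assume "\<gamma> \<in> full_group_level G Gs n"
  then obtain g \<sigma> where g: "atom_transfer g \<sigma>" "\<gamma> = piecewise_act g" by (rule full_group_levelE)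
  have "inv\<^bsub>full_group G Gs\<^esub> \<gamma> = piecewise_act (inverse_transfer g \<sigma>)"
    unfolding g(2) using atom_transfer_inverse[OF g(1)]
    by (intro full_group_inv_eq piecewise_act_in_full_group piecewise_act_inverse[OF g(1)])
  then show "inv\<^bsub>full_group G Gs\<^esub> \<gamma> \<in> full_group_level G Gs n"
    using piecewise_act_in_level[OF atom_transfer_inverse[OF g(1)]] by simp
qed

end


subsection \<open>The isomorphism with \<open>G\<^sub>n\<^sup>p \<rtimes> S\<^sub>p\<close>\<close>

context odometer_level
begin

abbreviation "SD \<equiv> perm_semidirect (G\<lparr>carrier := Gs n\<rparr>) p"
abbreviation "level_group \<equiv> (full_group G Gs)\<lparr>carrier := full_group_level G Gs n\<rparr>"

lemma translates_enum_iff: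
  assumes "i < p" "j < p" "x \<in> carrier G"
  shows "x <# e i = e j \<longleftrightarrow> inv (coset_rep j) \<otimes> (x \<otimes> coset_rep i) \<in> Gs n"
proof -
  note ri = coset_rep[OF assms(1)] and rj = coset_rep[OF assms(2)]
  have "x <# e i = (x \<otimes> coset_rep i) <# Gs n"
    by (subst conjunct2[OF ri]) (rule lcos_m_assoc[OF subgroup.subset[OF subgroup_Gs] assms(3) conjunct1[OF ri]])
  moreover have "x \<otimes> coset_rep i \<in> carrier G" using assms(3) ri by simp
  ultimately show ?thesis
    using l_coset_eq_iff_inv_mult_mem[OF subgroup_Gs _ conjunct1[OF rj]] conjunct2[OF rj] by simp
qed

text \<open>Conjugation by the coset representatives turns a translation of the \<open>i\<close>-th atom onto
  the \<open>\<sigma> i\<close>-th one into an element of \<open>G\<^sub>n\<close>.\<close>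

definition normal_part :: "(nat \<Rightarrow> 'a) \<Rightarrow> (nat \<Rightarrow> nat) \<Rightarrow> nat \<Rightarrow> 'a" where
  "normal_part g \<sigma> i = inv (coset_rep (\<sigma> i)) \<otimes> (g i \<otimes> coset_rep i)"

definition coords :: "(nat \<Rightarrow> 'a) \<Rightarrow> (nat \<Rightarrow> nat) \<Rightarrow> (nat \<Rightarrow> 'a) \<times> (nat \<Rightarrow> nat)" where
  "coords g \<sigma> = ((\<lambda>j\<in>I. normal_part g \<sigma> (inv_into I \<sigma> j)), \<sigma>)"

definition semidirect_coords :: "((nat \<Rightarrow> 'a set) \<Rightarrow> (nat \<Rightarrow> 'a set)) \<Rightarrow> (nat \<Rightarrow> 'a) \<times> (nat \<Rightarrow> nat)" where
  "semidirect_coords \<gamma> = coords (level_cocycle \<gamma>) (level_perm \<gamma>)"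

lemma normal_part_mem:
  assumes g: "atom_transfer g \<sigma>" and i: "i < p"
  shows "normal_part g \<sigma> i \<in> Gs n"
  using translates_enum_iff[OF i atom_transferD(3,1)[OF g i]] atom_transferD(2)[OF g i]
  by (simp add: normal_part_def)

lemma normal_part_comp:
  assumes g: "atom_transfer g \<sigma>" and h: "atom_transfer h \<tau>" and i: "i < p"
  shows "normal_part (\<lambda>i. g (\<tau> i) \<otimes> h i) (\<sigma> \<circ> \<tau>) i = normal_part g \<sigma> (\<tau> i) \<otimes> normal_part h \<tau> i"
proof -
  have ti: "\<tau> i < p" using atom_transferD(3)[OF h i] .
  have "coset_rep i \<in> carrier G" "coset_rep (\<tau> i) \<in> carrier G" "coset_rep (\<sigma> (\<tau> i)) \<in> carrier G"
    using coset_rep i ti atom_transferD(3)[OF g ti] by auto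
  moreover have "g (\<tau> i) \<in> carrier G" "h i \<in> carrier G"
    using atom_transferD(1) g h i ti by auto
  ultimately show ?thesis by (simp add: normal_part_def m_assoc mult_inv_cancel_left)
qed

lemma coords_in_carrier:
  assumes g: "atom_transfer g \<sigma>"
  shows "coords g \<sigma> \<in> carrier SD"
proof -
  have perm: "\<sigma> permutes I" using g by (simp add: atom_transfer_def)
  have "normal_part g \<sigma> (inv_into I \<sigma> j) \<in> Gs n" if "j \<in> I" for j
    using normal_part_mem[OF g] permutes_inv_into(1)[OF perm that] by simp
  then show ?thesis using perm by (simp add: coords_def perm_semidirect_def)
qed

lemma coords_mult:
  assumes g: "atom_transfer g \<sigma>" and h: "atom_transfer h \<tau>"
  shows "coords (\<lambda>i. g (\<tau> i) \<otimes> h i) (\<sigma> \<circ> \<tau>) = coords g \<sigma> \<otimes>\<^bsub>SD\<^esub> coords h \<tau>"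
proof -
  have ps: "\<sigma> permutes I" and pt: "\<tau> permutes I" using g h by (auto simp: atom_transfer_def)
  have "normal_part (\<lambda>i. g (\<tau> i) \<otimes> h i) (\<sigma> \<circ> \<tau>) (inv_into I (\<sigma> \<circ> \<tau>) j)
      = normal_part g \<sigma> (inv_into I \<sigma> j) \<otimes> normal_part h \<tau> (inv_into I \<tau> (inv_into I \<sigma> j))"
    if j: "j \<in> I" for j
  proof -
    define l where "l = inv_into I \<sigma> j"
    define q where "q = inv_into I \<tau> l"
    have l: "l \<in> I" "\<sigma> l = j" using permutes_inv_into[OF ps j] by (simp_all add: l_def)
    have q: "q \<in> I" "\<tau> q = l" using permutes_inv_into[OF pt l(1)] by (simp_all add: q_def)
    have "inv_into I (\<sigma> \<circ> \<tau>) j = q"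
      using bij_betw_inv_into_left[OF permutes_imp_bij[OF permutes_compose[OF pt ps]] q(1)] q(2) l(2)
      by simp
    then show ?thesis
      using normal_part_comp[OF g h] q by (simp add: l_def[symmetric] q_def[symmetric])
  qed
  then show ?thesis
    unfolding coords_def perm_semidirect_def
    using permutes_inv_into(1)[OF ps] by (auto intro!: restrict_ext)
qed

lemma coords_eq_imp_piecewise_act_eq:
  assumes g: "atom_transfer g \<sigma>" and h: "atom_transfer h \<tau>" and eq: "coords g \<sigma> = coords h \<tau>"
  shows "piecewise_act g = piecewise_act h"
proof (rule piecewise_act_cong)
  fix i assume i: "i < p"
  have st: "\<sigma> = \<tau>" using eq by (simp add: coords_def)
  have ps: "\<sigma> permutes I" using g by (simp add: atom_transfer_def)
  have "(\<lambda>j\<in>I. normal_part g \<sigma> (inv_into I \<sigma> j)) = (\<lambda>j\<in>I. normal_part h \<sigma> (inv_into I \<sigma> j))"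
    using eq st by (simp add: coords_def)
  from fun_cong[OF this, of "\<sigma> i"] have "normal_part g \<sigma> i = normal_part h \<sigma> i"
    using atom_transferD(3)[OF g i] bij_betw_inv_into_left[OF permutes_imp_bij[OF ps]] i by simp
  moreover have "coset_rep i \<in> carrier G" "coset_rep (\<sigma> i) \<in> carrier G"
    using coset_rep i atom_transferD(3)[OF g i] by auto
  moreover have "g i \<in> carrier G" "h i \<in> carrier G" using atom_transferD(1) g h i by auto
  ultimately show "g i = h i" by (simp add: normal_part_def)
qed

lemma coords_surj:
  assumes z: "z \<in> carrier SD"
  obtains g \<sigma> where "atom_transfer g \<sigma>" "coords g \<sigma> = z"
proof -
  obtain a \<sigma> where z': "z = (a, \<sigma>)" "a \<in> I \<rightarrow>\<^sub>E Gs n" "\<sigma> permutes I"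
    using z by (auto simp: perm_semidirect_def)
  define g where "g i = coset_rep (\<sigma> i) \<otimes> (a (\<sigma> i) \<otimes> inv (coset_rep i))" for i
  have ga: "g i \<in> carrier G" "normal_part g \<sigma> i = a (\<sigma> i)" "a (\<sigma> i) \<in> Gs n" if i: "i < p" for i
  proof -
    have si: "\<sigma> i < p" using permutes_in_image[OF z'(3)] i by simp
    show "a (\<sigma> i) \<in> Gs n" using z'(2) si by auto
    then have "a (\<sigma> i) \<in> carrier G" using subgroup.subset[OF subgroup_Gs] by blast
    then show "g i \<in> carrier G" "normal_part g \<sigma> i = a (\<sigma> i)"
      using coset_rep[OF i] coset_rep[OF si]
      by (simp_all add: g_def normal_part_def m_assoc inv_mult_cancel_left)
  qed
  have g: "atom_transfer g \<sigma>"
    unfolding atom_transfer_def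
  proof (intro conjI allI impI)
    fix i assume i: "i < p"
    show "g i \<in> carrier G" using ga(1)[OF i] .
    show "g i <# e i = e (\<sigma> i)"
      using translates_enum_iff[OF i _ ga(1)[OF i]] permutes_in_image[OF z'(3)] i ga(2,3)[OF i]
      by (simp add: normal_part_def)
  qed (rule z'(3))
  have "(\<lambda>j\<in>I. normal_part g \<sigma> (inv_into I \<sigma> j)) = a"
  proof
    fix j show "(\<lambda>j\<in>I. normal_part g \<sigma> (inv_into I \<sigma> j)) j = a j"
    proof (cases "j \<in> I")
      case True
      then show ?thesis using ga(2) permutes_inv_into[OF z'(3) True] by simp
    next
      case False
      then show ?thesis using PiE_arb[OF z'(2) False] by simp
    qed
  qed
  then show thesis using that[OF g] z'(1) by (simp add: coords_def)
qed

lemma semidirect_coords_piecewise_act: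
  assumes g: "atom_transfer g \<sigma>"
  shows "semidirect_coords (piecewise_act g) = coords g \<sigma>"
proof -
  have perm: "\<sigma> permutes I" using g by (simp add: atom_transfer_def)
  have "normal_part (level_cocycle (piecewise_act g)) \<sigma> i = normal_part g \<sigma> i" if "i < p" for i
    using level_cocycle_piecewise_act[OF g that] by (simp add: normal_part_def)
  then show ?thesis
    using permutes_inv_into(1)[OF perm] level_perm_piecewise_act[OF g]
    by (auto simp: semidirect_coords_def coords_def intro!: restrict_ext)
qed

lemma semidirect_coords_hom: "semidirect_coords \<in> hom level_group SD"
proof (rule homI)
  fix \<gamma> assume "\<gamma> \<in> carrier level_group"
  then obtain g \<sigma> where "atom_transfer g \<sigma>" "\<gamma> = piecewise_act g" by (auto elim: full_group_levelE)
  then show "semidirect_coords \<gamma> \<in> carrier SD"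
    using coords_in_carrier semidirect_coords_piecewise_act by simp
next
  fix \<gamma> \<delta> assume "\<gamma> \<in> carrier level_group" and "\<delta> \<in> carrier level_group"
  then obtain g \<sigma> h \<tau> where g: "atom_transfer g \<sigma>" "\<gamma> = piecewise_act g"
    and h: "atom_transfer h \<tau>" "\<delta> = piecewise_act h"
    by (auto elim!: full_group_levelE)
  then show "semidirect_coords (\<gamma> \<otimes>\<^bsub>level_group\<^esub> \<delta>) = semidirect_coords \<gamma> \<otimes>\<^bsub>SD\<^esub> semidirect_coords \<delta>"
    using piecewise_act_comp[OF g(1) h(1)] semidirect_coords_piecewise_act[OF atom_transfer_comp[OF g(1) h(1)]]
      semidirect_coords_piecewise_act[OF g(1)] semidirect_coords_piecewise_act[OF h(1)] coords_mult[OF g(1) h(1)]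
    by (simp add: full_group_def)
qed

lemma semidirect_coords_iso: "semidirect_coords \<in> iso level_group SD"
proof -
  note semidirect_coords_hom
  moreover have "inj_on semidirect_coords (full_group_level G Gs n)"
  proof (rule inj_onI)
    fix \<gamma> \<delta> assume \<gamma>: "\<gamma> \<in> full_group_level G Gs n" and \<delta>: "\<delta> \<in> full_group_level G Gs n"
      and eq: "semidirect_coords \<gamma> = semidirect_coords \<delta>"
    obtain g \<sigma> where g: "atom_transfer g \<sigma>" "\<gamma> = piecewise_act g" using \<gamma> by (rule full_group_levelE)
    obtain h \<tau> where h: "atom_transfer h \<tau>" "\<delta> = piecewise_act h" using \<delta> by (rule full_group_levelE)
    show "\<gamma> = \<delta>"
      using coords_eq_imp_piecewise_act_eq[OF g(1) h(1)] eq
        semidirect_coords_piecewise_act[OF g(1)] semidirect_coords_piecewise_act[OF h(1)]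
      by (simp add: g(2) h(2))
  qed
  moreover have "carrier SD \<subseteq> semidirect_coords ` full_group_level G Gs n"
  proof
    fix z assume "z \<in> carrier SD"
    then obtain g \<sigma> where "atom_transfer g \<sigma>" "coords g \<sigma> = z" by (rule coords_surj)
    then show "z \<in> semidirect_coords ` full_group_level G Gs n"
      using piecewise_act_in_level semidirect_coords_piecewise_act by (metis image_eqI)
  qed
  ultimately show ?thesis
    unfolding iso_def bij_betw_def by (auto simp: hom_def)
qed

lemma level_image_atom:
  assumes \<gamma>: "\<gamma> \<in> full_group_level G Gs n" and i: "i < p"
  shows "\<gamma> ` atom G Gs n (e i) = atom G Gs n (e (snd (semidirect_coords \<gamma>) i))"
proof -
  have "\<gamma> ` atom G Gs n (e i) = piecewise_act (level_cocycle \<gamma>) ` atom G Gs n (e i)"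
    using level_eq_piecewise_act[OF \<gamma>] by (rule arg_cong)
  also have "\<dots> = atom G Gs n (e (level_perm \<gamma> i))"
    by (rule piecewise_act_image[OF level_atom_transfer[OF \<gamma>] i])
  finally show ?thesis by (simp add: semidirect_coords_def coords_def)
qed

end

lemma (in free_odometer_action) ex_odometer_level: "\<exists>e. odometer_level G Gs n e"
proof -
  obtain e where "bij_betw e {0..<card (cosets n)} (cosets n)"
    using ex_bij_betw_nat_finite[OF finite_index] by blast
  then have "odometer_level G Gs n e"
    by (intro odometer_level.intro odometer_level_axioms.intro free_odometer_action_axioms)
  then show ?thesis by blast
qed

lemma (in free_odometer_action) full_group_level_semidirect_product:
  "\<exists>\<phi> e. \<phi> \<in> iso ((full_group G Gs)\<lparr>carrier := full_group_level G Gs n\<rparr>)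
                (perm_semidirect (G\<lparr>carrier := Gs n\<rparr>) (card (cosets n)))
     \<and> bij_betw e {0..<card (cosets n)} (cosets n)
     \<and> (\<forall>\<gamma> \<in> full_group_level G Gs n. \<forall>i < card (cosets n).
           \<gamma> ` atom G Gs n (e i) = atom G Gs n (e (snd (\<phi> \<gamma>) i)))"
proof -
  obtain e where "odometer_level G Gs n e" using ex_odometer_level by blast
  then interpret odometer_level G Gs n e .
  show ?thesis
  proof (intro exI conjI ballI allI impI)
    show "semidirect_coords \<in> iso level_group SD"
      by (rule semidirect_coords_iso)
    show "bij_betw e {0..<p} (cosets n)" by (rule enum_cosets)
    fix \<gamma> i assume "\<gamma> \<in> full_group_level G Gs n" "i < p"
    then show "\<gamma> ` atom G Gs n (e i) = atom G Gs n (e (snd (semidirect_coords \<gamma>) i))"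
      by (rule level_image_atom)
  qed
qed

theorem proposition4p5:
  fixes G :: "('a, 'b) monoid_scheme" and Gs :: "nat \<Rightarrow> 'a set"
  assumes grp: "group G"
    and normal: "\<And>n. Gs n \<lhd> G"
    and fin_index: "\<And>n. finite (left_cosets G (Gs n))"
    and decr: "\<And>n. Gs (Suc n) \<subseteq> Gs n"
    and free: "free_odometer G Gs"
  shows "(\<forall>n. \<exists>\<phi> e.
            \<phi> \<in> iso ((full_group G Gs)\<lparr>carrier := full_group_level G Gs n\<rparr>)
                    (perm_semidirect (G\<lparr>carrier := Gs n\<rparr>) (card (left_cosets G (Gs n))))
          \<and> bij_betw e {0..<card (left_cosets G (Gs n))} (left_cosets G (Gs n))
          \<and> (\<forall>\<gamma> \<in> full_group_level G Gs n. \<forall>i < card (left_cosets G (Gs n)).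
                \<gamma> ` atom G Gs n (e i) = atom G Gs n (e (snd (\<phi> \<gamma>) i))))
       \<and> (\<forall>n. subgroup (full_group_level G Gs n) (full_group G Gs))
       \<and> (\<forall>n. full_group_level G Gs n \<subseteq> full_group_level G Gs (Suc n))
       \<and> full_group_carrier G Gs = (\<Union>n. full_group_level G Gs n)"
proof -
  have "free_odometer_action G Gs"
    unfolding free_odometer_action_def free_odometer_action_axioms_def
    using grp normal_imp_subgroup[OF normal] fin_index decr free by blast
  then interpret free_odometer_action G Gs .
  have "subgroup (full_group_level G Gs n) (full_group G Gs)" for n
    using ex_odometer_level odometer_level.full_group_level_subgroup by blast
  then show ?thesis
    using full_group_level_semidirect_product full_group_level_mono full_group_eq_Union_levels
    by blast
qed

end
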